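(* Let $V$ be a finite set and $\mu\colon\binom V2\to\mathbb{Z}_+$ such that the graph $G(\mu)$ is connected. Let $V'\subseteq V$ be a nonempty subset such that the induced subgraph $G(\mu)|_{V'}$ is connected. Then $n(\mu,V)\geqslant n(\mu,V')$, where $n(\mu,V')$ is computed for the restriction of $\mu$ to $\binom{V'}{2}$.
   Context: $G(\mu)$ is the simple graph on $V$ whose edges are the pairs $e\in\binom V2$ with $\mu(e)>1$. For a finite set $W$ with $|W|=m$ and $\mu\colon\binom W2\to\mathbb{Z}_+$, $n(\mu,W)=\sum_{J\subseteq W,|J|\geqslant2}(-1)^{m-|J|}\prod_{e\in\binom J2}\mu(e)+(-1)^{m-1}(m-1)$ (the number of spheres in a wedge homotopy equivalent to the edge inflation of the simplex on $W$). *)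

theory Defs
  imports Main
begin

definition binom2 :: "'a set \<Rightarrow> 'a set set" where
  "binom2 W = {e. e \<subseteq> W \<and> card e = 2}"

text \<open>Edge relation of the simple graph G(mu) restricted to vertex set W
  (the induced subgraph on W): pairs with mu(e) > 1.\<close>
definition Gedges :: "('a set \<Rightarrow> nat) \<Rightarrow> 'a set \<Rightarrow> ('a \<times> 'a) set" where
  "Gedges \<mu> W = {(x, y). x \<in> W \<and> y \<in> W \<and> x \<noteq> y \<and> \<mu> {x, y} > 1}"

definition G_connected :: "('a set \<Rightarrow> nat) \<Rightarrow> 'a set \<Rightarrow> bool" where
  "G_connected \<mu> W = (\<forall>x\<in>W. \<forall>y\<in>W. (x, y) \<in> (Gedges \<mu> W)\<^sup>*)"

definition n_mu :: "('a set \<Rightarrow> nat) \<Rightarrow> 'a set \<Rightarrow> int" where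
  "n_mu \<mu> W =
     (\<Sum>J\<in>{J. J \<subseteq> W \<and> card J \<ge> 2}.
        (-1) ^ (card W - card J) * (\<Prod>e\<in>binom2 J. int (\<mu> e)))
     + (-1) ^ (card W - 1) * (int (card W) - 1)"

end

theory Submission
  imports Defs
begin

text \<open>Write \<open>\<mu> = 1 + \<nu>\<close>. Expanding \<open>\<Prod>e\<in>binom2 J. (1 + \<nu> e)\<close> and grouping the edge sets by
  the vertices they cover, Moebius inversion turns the alternating sum defining \<open>n(\<mu>,W)\<close> into
  the sum of \<open>\<Prod>e\<in>F. \<nu> e\<close> over the edge sets \<open>F\<close> covering exactly \<open>W\<close>; all terms are
  nonnegative when \<open>\<mu> \<ge> 1\<close>. Choosing for each vertex of \<open>V - V'\<close> one edge of \<open>G(\<mu>)\<close> gives an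
  edge set \<open>T\<close> with \<open>\<nu> \<ge> 1\<close> on \<open>T\<close>, and \<open>F \<mapsto> F \<union> T\<close> injects the covers of \<open>V'\<close> into the
  covers of \<open>V\<close> without decreasing the products.\<close>

definition excess :: "('a set \<Rightarrow> nat) \<Rightarrow> 'a set \<Rightarrow> int" where
  "excess \<mu> e = int (\<mu> e) - 1"

definition edge_covers :: "'a set \<Rightarrow> 'a set set set" where
  "edge_covers W = {F. F \<subseteq> binom2 W \<and> \<Union>F = W}"

definition cover_sum :: "('a set \<Rightarrow> nat) \<Rightarrow> 'a set \<Rightarrow> int" where
  "cover_sum \<mu> W = (\<Sum>F\<in>edge_covers W. \<Prod>e\<in>F. excess \<mu> e)"

lemma finite_binom2: "finite S \<Longrightarrow> finite (binom2 S)"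
  unfolding binom2_def by (rule finite_subset[of _ "Pow S"]) auto

lemma binom2_mono: "T \<subseteq> S \<Longrightarrow> binom2 T \<subseteq> binom2 S"
  unfolding binom2_def by auto

lemma binom2_eq_empty_if_card_less_2:
  assumes "finite T" "card T < 2"
  shows "binom2 T = {}"
proof -
  have "\<not> (e \<subseteq> T \<and> card e = 2)" for e
    using assms card_mono[OF assms(1), of e] by linarith
  then show ?thesis
    unfolding binom2_def by blast
qed

lemma finite_edge_covers: "finite W \<Longrightarrow> finite (edge_covers W)"
  unfolding edge_covers_def
  by (rule finite_subset[of _ "Pow (binom2 W)"]) (blast, simp add: finite_binom2)

lemma edge_sets_with_union:
  assumes "T \<subseteq> S"
  shows "{F. F \<subseteq> binom2 S \<and> \<Union>F = T} = edge_covers T"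
  using binom2_mono[OF assms] unfolding edge_covers_def binom2_def by blast

lemma prod_binom2_eq_sum_cover_sum:
  assumes "finite S"
  shows "(\<Prod>e\<in>binom2 S. int (\<mu> e)) = (\<Sum>T\<in>Pow S. cover_sum \<mu> T)"
proof -
  have "(\<Prod>e\<in>binom2 S. int (\<mu> e)) = (\<Prod>e\<in>binom2 S. excess \<mu> e + 1)"
    by (simp add: excess_def)
  also have "\<dots> = (\<Sum>F\<in>Pow (binom2 S). \<Prod>e\<in>F. excess \<mu> e)"
    by (simp add: prod_add finite_binom2 assms)
  also have "\<dots> = (\<Sum>T\<in>Pow S. \<Sum>F\<in>{F \<in> Pow (binom2 S). \<Union>F = T}. \<Prod>e\<in>F. excess \<mu> e)"
    by (rule sum.group[symmetric]) (auto simp: assms finite_binom2 binom2_def)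
  also have "\<dots> = (\<Sum>T\<in>Pow S. cover_sum \<mu> T)"
    by (rule sum.cong) (simp_all add: cover_sum_def edge_sets_with_union)
  finally show ?thesis .
qed

lemma subsets_card_less_2:
  assumes "finite W"
  shows "{J. J \<subseteq> W \<and> \<not> 2 \<le> card J} = insert {} ((\<lambda>x. {x}) ` W)"
proof (intro equalityI subsetI)
  fix J assume J: "J \<in> {J. J \<subseteq> W \<and> \<not> 2 \<le> card J}"
  then have "finite J" using assms finite_subset by blast
  from J have "card J < 2" by simp
  then have "card J = 0 \<or> card J = 1" by arith
  then have "J = {} \<or> (\<exists>x. J = {x})"
    using \<open>finite J\<close> by (metis One_nat_def card_0_eq card_1_singleton_iff)
  with J show "J \<in> insert {} ((\<lambda>x. {x}) ` W)" by blast
qed auto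

text \<open>For \<open>W = {}\<close> the two sides are \<open>-1\<close> and \<open>1\<close>.\<close>

lemma n_mu_eq_cover_sum:
  assumes "finite W" "W \<noteq> {}"
  shows "n_mu \<mu> W = cover_sum \<mu> W"
proof -
  let ?h = "\<lambda>T. (-1::int) ^ (card W - card T) * (\<Prod>e\<in>binom2 T. int (\<mu> e))"
  let ?big = "{J. J \<subseteq> W \<and> 2 \<le> card J}" and ?small = "{J. J \<subseteq> W \<and> \<not> 2 \<le> card J}"
  have "cover_sum \<mu> W = (\<Sum>T\<in>Pow W. ?h T)"
    by (rule inclusion_exclusion_mobius) (simp_all add: prod_binom2_eq_sum_cover_sum assms)
  also have "\<dots> = sum ?h (?big \<union> ?small)"
    by (rule sum.cong) auto
  also have "\<dots> = sum ?h ?big + sum ?h ?small"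
    using assms by (intro sum.union_disjoint) (auto intro: finite_subset[of _ "Pow W"])
  also have "sum ?h ?small = ?h {} + sum ?h ((\<lambda>x. {x}) ` W)"
    using assms by (simp add: subsets_card_less_2 image_iff)
  also have "\<dots> = (-1) ^ card W + (\<Sum>x\<in>W. ?h {x})"
    by (simp add: sum.reindex binom2_eq_empty_if_card_less_2)
  also have "(\<Sum>x\<in>W. ?h {x}) = int (card W) * (-1) ^ (card W - 1)"
    by (simp add: binom2_eq_empty_if_card_less_2)
  also have "(-1) ^ card W + int (card W) * (-1) ^ (card W - 1)
      = (-1::int) ^ (card W - 1) * (int (card W) - 1)"
  proof -
    obtain k where "card W = Suc k"
      using assms by (cases "card W") auto
    then show ?thesis by (simp add: algebra_simps)
  qed
  finally show ?thesis
    unfolding n_mu_def by simp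
qed

lemma cover_sum_mono:
  assumes "finite V" and pos: "\<forall>e\<in>binom2 V. \<mu> e > 0"
    and T: "T \<subseteq> binom2 V" "T \<inter> binom2 V' = {}" "V' \<union> \<Union>T = V" "\<forall>e\<in>T. \<mu> e > 1"
  shows "cover_sum \<mu> V' \<le> cover_sum \<mu> V"
proof -
  have "V' \<subseteq> V" using T(3) by blast
  then have "finite V'" "binom2 V' \<subseteq> binom2 V"
    using assms(1) finite_subset binom2_mono by blast+
  have "finite T" using T(1) assms(1) finite_binom2 finite_subset by blast
  have nonneg: "0 \<le> (\<Prod>e\<in>F. excess \<mu> e)" if "F \<subseteq> binom2 V" for F
    using that pos by (auto intro!: prod_nonneg simp: excess_def)
  have T_ge_1: "1 \<le> (\<Prod>e\<in>T. excess \<mu> e)"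
    using T(4) by (auto intro!: prod_ge_1 simp: excess_def)
  have grow: "(\<Prod>e\<in>F. excess \<mu> e) \<le> (\<Prod>e\<in>F \<union> T. excess \<mu> e)" if "F \<in> edge_covers V'" for F
  proof -
    have "F \<subseteq> binom2 V'" using that by (simp add: edge_covers_def)
    then have "finite F" "F \<inter> T = {}"
      using \<open>finite V'\<close> finite_binom2 finite_subset T(2) by blast+
    then have "(\<Prod>e\<in>F \<union> T. excess \<mu> e) = (\<Prod>e\<in>F. excess \<mu> e) * (\<Prod>e\<in>T. excess \<mu> e)"
      by (simp add: prod.union_disjoint \<open>finite T\<close>)
    moreover have "0 \<le> (\<Prod>e\<in>F. excess \<mu> e)"
      using nonneg \<open>F \<subseteq> binom2 V'\<close> \<open>binom2 V' \<subseteq> binom2 V\<close> by blast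
    ultimately show ?thesis
      using T_ge_1 by (simp add: mult_le_cancel_left1)
  qed
  have inj: "inj_on (\<lambda>F. F \<union> T) (edge_covers V')"
    using T(2) by (auto simp: inj_on_def edge_covers_def)
  have img: "(\<lambda>F. F \<union> T) ` edge_covers V' \<subseteq> edge_covers V"
    using T \<open>binom2 V' \<subseteq> binom2 V\<close> by (auto simp: edge_covers_def)
  have "cover_sum \<mu> V' \<le> (\<Sum>F\<in>edge_covers V'. \<Prod>e\<in>F \<union> T. excess \<mu> e)"
    unfolding cover_sum_def by (rule sum_mono) (rule grow)
  also have "\<dots> = (\<Sum>F\<in>(\<lambda>F. F \<union> T) ` edge_covers V'. \<Prod>e\<in>F. excess \<mu> e)"
    by (simp add: sum.reindex[OF inj])
  also have "\<dots> \<le> cover_sum \<mu> V"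
    unfolding cover_sum_def
    by (rule sum_mono2[OF finite_edge_covers[OF assms(1)] img])
      (use nonneg in \<open>auto simp: edge_covers_def\<close>)
  finally show ?thesis .
qed

lemma G_connected_has_neighbour:
  assumes "G_connected \<mu> V" "x \<in> V" "y \<in> V" "x \<noteq> y"
  shows "\<exists>u. (x, u) \<in> Gedges \<mu> V"
proof -
  have "(x, y) \<in> (Gedges \<mu> V)\<^sup>*"
    using assms(1-3) unfolding G_connected_def by blast
  then show ?thesis
    using assms(4) by (cases rule: converse_rtranclE) auto
qed

lemma obtain_edges_covering_complement:
  assumes "V' \<subseteq> V" and nbr: "\<forall>v\<in>V - V'. \<exists>u. (v, u) \<in> Gedges \<mu> V"
  obtains T where "T \<subseteq> binom2 V" "T \<inter> binom2 V' = {}" "V' \<union> \<Union>T = V" "\<forall>e\<in>T. \<mu> e > 1"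
proof -
  have "\<forall>v\<in>V - V'. \<exists>u. u \<in> V \<and> v \<noteq> u \<and> \<mu> {v, u} > 1"
    using nbr by (simp add: Gedges_def)
  then obtain w where w: "\<And>v. v \<in> V - V' \<Longrightarrow> w v \<in> V \<and> v \<noteq> w v \<and> \<mu> {v, w v} > 1"
    by metis
  let ?T = "(\<lambda>v. {v, w v}) ` (V - V')"
  have "?T \<subseteq> binom2 V"
    using w by (force simp: binom2_def)
  moreover have "?T \<inter> binom2 V' = {}"
    by (force simp: binom2_def)
  moreover have "V' \<union> \<Union>?T = V"
    using w assms(1) by blast
  moreover have "\<forall>e\<in>?T. \<mu> e > 1"
    using w by blast
  ultimately show ?thesis by (rule that)
qed

theorem lemma4p14:
  fixes V V' :: "'a set" and \<mu> :: "'a set \<Rightarrow> nat"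
  assumes "finite V"
    and "\<forall>e\<in>binom2 V. \<mu> e > 0"
    and "G_connected \<mu> V"
    and "V' \<subseteq> V" and "V' \<noteq> {}"
    and "G_connected \<mu> V'"
  shows "n_mu \<mu> V \<ge> n_mu \<mu> V'"
proof -
  have "finite V'" "V \<noteq> {}"
    using assms(1,4,5) finite_subset by auto
  have "\<forall>v\<in>V - V'. \<exists>u. (v, u) \<in> Gedges \<mu> V"
    using G_connected_has_neighbour[OF assms(3)] assms(4,5) by blast
  with assms(4) obtain T where
    "T \<subseteq> binom2 V" "T \<inter> binom2 V' = {}" "V' \<union> \<Union>T = V" "\<forall>e\<in>T. \<mu> e > 1"
    by (rule obtain_edges_covering_complement)
  with assms(1,2) have "cover_sum \<mu> V' \<le> cover_sum \<mu> V"
    by (rule cover_sum_mono)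
  then show ?thesis
    using \<open>finite V'\<close> \<open>V \<noteq> {}\<close> assms(1,5) by (simp add: n_mu_eq_cover_sum)
qed

end
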